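(* Let $X=X(K,U)$ be an OT-manifold and $T=\mathbb{C}^d/\Lambda$ a complex torus. Then every holomorphic map $f:T\to X$ is constant.
   Context: Let $K$ be a number field with $s>0$ real embeddings $\sigma_1,\dots,\sigma_s$ and $2t>0$ non-real complex embeddings $\tau_1,\bar\tau_1,\dots,\tau_t,\bar\tau_t$; $\mathcal{O}_K$ its ring of integers, $\mathcal{O}_K^{*,+}$ its totally positive units, $\mathbb{H}$ the upper half-plane. The group $U\ltimes\mathcal{O}_K$ ($U\subset\mathcal{O}_K^{*,+}$) acts on $\mathbb{H}^s\times\mathbb{C}^t$: $\zeta\in\mathcal{O}_K$ by translation by $(\sigma_1(\zeta),\dots,\sigma_s(\zeta),\tau_1(\zeta),\dots,\tau_t(\zeta))$ and $\xi\in U$ by coordinatewise multiplication by $(\sigma_1(\xi),\dots,\sigma_s(\xi),\tau_1(\xi),\dots,\tau_t(\xi))$. $U$ is admissible if this action is properly discontinuous and cocompact; the OT-manifold is $X(K,U)=(\mathbb{H}^s\times\mathbb{C}^t)/(U\ltimes\mathcal{O}_K)$. *)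

theory Defs
  imports "HOL-Analysis.Analysis" "HOL-Computational_Algebra.Polynomial"
begin

definition subfield_C :: "complex set \<Rightarrow> bool" where
  "subfield_C K \<longleftrightarrow> 0 \<in> K \<and> 1 \<in> K \<and>
     (\<forall>x\<in>K. \<forall>y\<in>K. x + y \<in> K \<and> x - y \<in> K \<and> x * y \<in> K) \<and>
     (\<forall>x\<in>K. x \<noteq> 0 \<longrightarrow> inverse x \<in> K)"

definition number_field :: "complex set \<Rightarrow> bool" where
  "number_field K \<longleftrightarrow> subfield_C K \<and>
     (\<exists>B. finite B \<and> B \<subseteq> K \<and> K \<subseteq> {\<Sum>b\<in>B. of_rat (q b) * b | q. True})"

definition ring_of_integers :: "complex set \<Rightarrow> complex set" where
  "ring_of_integers K = {x \<in> K. algebraic_int x}"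

text \<open>Field embeddings K -> C (ring homomorphisms on K, only their values on K matter).\<close>
definition field_embedding :: "complex set \<Rightarrow> (complex \<Rightarrow> complex) \<Rightarrow> bool" where
  "field_embedding K \<sigma> \<longleftrightarrow> \<sigma> 1 = 1 \<and>
     (\<forall>x\<in>K. \<forall>y\<in>K. \<sigma> (x + y) = \<sigma> x + \<sigma> y \<and> \<sigma> (x * y) = \<sigma> x * \<sigma> y)"

text \<open>Embedding data: the coordinates are indexed by a finite type 'm; \<open>emb i\<close> for
  \<open>i \<in> R\<close> are the s real embeddings, \<open>emb i\<close> for \<open>i \<notin> R\<close> are representatives
  tau_1..tau_t of the t pairs of complex conjugate non-real embeddings.\<close>
definition embedding_data :: "complex set \<Rightarrow> 'm set \<Rightarrow> ('m \<Rightarrow> complex \<Rightarrow> complex) \<Rightarrow> bool" where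
  "embedding_data K R emb \<longleftrightarrow>
     (\<forall>i. field_embedding K (emb i)) \<and>
     (\<forall>i\<in>R. \<forall>x\<in>K. emb i x \<in> \<real>) \<and>
     (\<forall>i. i \<notin> R \<longrightarrow> (\<exists>x\<in>K. emb i x \<notin> \<real>)) \<and>
     (\<forall>i j. i \<noteq> j \<longrightarrow> (\<exists>x\<in>K. emb i x \<noteq> emb j x) \<and> (\<exists>x\<in>K. emb i x \<noteq> cnj (emb j x))) \<and>
     (\<forall>\<sigma>. field_embedding K \<sigma> \<longrightarrow>
        (\<exists>i. \<forall>x\<in>K. \<sigma> x = emb i x) \<or> (\<exists>i. i \<notin> R \<and> (\<forall>x\<in>K. \<sigma> x = cnj (emb i x))))"

definition totally_positive_units ::
    "complex set \<Rightarrow> 'm set \<Rightarrow> ('m \<Rightarrow> complex \<Rightarrow> complex) \<Rightarrow> complex set" where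
  "totally_positive_units K R emb =
     {u \<in> ring_of_integers K. inverse u \<in> ring_of_integers K \<and>
        (\<forall>i\<in>R. emb i u \<in> \<real> \<and> Re (emb i u) > 0)}"

definition mult_subgroup :: "complex set \<Rightarrow> bool" where
  "mult_subgroup U \<longleftrightarrow> 1 \<in> U \<and> (\<forall>u\<in>U. \<forall>v\<in>U. u * v \<in> U) \<and> (\<forall>u\<in>U. inverse u \<in> U)"

text \<open>H^s x C^t, coordinates in R lie in the upper half plane.\<close>
definition ot_domain :: "'m::finite set \<Rightarrow> (complex ^ 'm) set" where
  "ot_domain R = {z. \<forall>i\<in>R. Im (z $ i) > 0}"

definition ot_act :: "('m::finite \<Rightarrow> complex \<Rightarrow> complex) \<Rightarrow> complex \<Rightarrow> complex \<Rightarrow> complex ^ 'm \<Rightarrow> complex ^ 'm" where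
  "ot_act emb u a z = (\<chi> i. emb i u * z $ i + emb i a)"

definition ot_group :: "complex set \<Rightarrow> complex set \<Rightarrow> (complex \<times> complex) set" where
  "ot_group K U = {(u, a). u \<in> U \<and> a \<in> ring_of_integers K}"

definition admissible :: "complex set \<Rightarrow> 'm::finite set \<Rightarrow> ('m \<Rightarrow> complex \<Rightarrow> complex) \<Rightarrow> complex set \<Rightarrow> bool" where
  "admissible K R emb U \<longleftrightarrow>
     mult_subgroup U \<and> U \<subseteq> totally_positive_units K R emb \<and>
     \<comment> \<open>properly discontinuous\<close>
     (\<forall>C. compact C \<and> C \<subseteq> ot_domain R \<longrightarrow>
        finite {(u, a) \<in> ot_group K U. ot_act emb u a ` C \<inter> C \<noteq> {}}) \<and>
     \<comment> \<open>cocompact\<close>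
     (\<exists>C. compact C \<and> C \<subseteq> ot_domain R \<and>
        (\<Union>(u, a)\<in>ot_group K U. ot_act emb u a ` C) = ot_domain R)"

text \<open>Points of X(K,U) are orbits of points of H^s x C^t.\<close>
definition ot_orbit :: "complex set \<Rightarrow> ('m::finite \<Rightarrow> complex \<Rightarrow> complex) \<Rightarrow> complex set \<Rightarrow> complex ^ 'm \<Rightarrow> (complex ^ 'm) set" where
  "ot_orbit K emb U z = {ot_act emb u a z | u a. (u, a) \<in> ot_group K U}"

definition full_lattice :: "(complex ^ 'd::finite) set \<Rightarrow> bool" where
  "full_lattice \<Lambda> \<longleftrightarrow> (\<exists>B. independent B \<and> span B = UNIV \<and>
      \<Lambda> = {\<Sum>b\<in>B. of_int (c b) *\<^sub>R b | c. True})"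

definition holo_on :: "(complex ^ 'n::finite) set \<Rightarrow> (complex ^ 'n \<Rightarrow> complex ^ 'k::finite) \<Rightarrow> bool" where
  "holo_on V g \<longleftrightarrow> open V \<and>
     (\<forall>z\<in>V. \<exists>L. (g has_derivative L) (at z) \<and> (\<forall>c w. L (c *s w) = c *s L w))"

text \<open>A holomorphic map T = C^d/\<Lambda> -> X(K,U), represented as a \<Lambda>-periodic map F from C^d
  to the set of orbits, which locally lifts to a holomorphic map into H^s x C^t.\<close>
definition holo_map_torus_OT ::
    "(complex ^ 'd::finite) set \<Rightarrow> complex set \<Rightarrow> 'm::finite set \<Rightarrow> ('m \<Rightarrow> complex \<Rightarrow> complex) \<Rightarrow> complex set
     \<Rightarrow> (complex ^ 'd \<Rightarrow> (complex ^ 'm) set) \<Rightarrow> bool" where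
  "holo_map_torus_OT \<Lambda> K R emb U F \<longleftrightarrow>
     (\<forall>z l. l \<in> \<Lambda> \<longrightarrow> F (z + l) = F z) \<and>
     (\<forall>z. \<exists>V g. z \<in> V \<and> holo_on V g \<and> g ` V \<subseteq> ot_domain R \<and>
                (\<forall>w\<in>V. F w = ot_orbit K emb U (g w)))"

end

theory Submission
  imports Defs "HOL-Complex_Analysis.Complex_Analysis"
begin

text \<open>Pull \<open>F\<close> back along \<open>C\<^sup>d \<rightarrow> T\<close>. The pairs \<open>(w, y)\<close> with \<open>y\<close> in the orbit \<open>F w\<close> form a
  covering space of \<open>C\<^sup>d\<close>, because the action of \<open>U \<ltimes> O\<^sub>K\<close> is free and properly discontinuous;
  as \<open>C\<^sup>d\<close> is simply connected, it has a global continuous section \<open>G\<close>, which is locally a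
  translate of the holomorphic local lifts of \<open>F\<close>, hence holomorphic. On complex lines the
  real-place coordinates of \<open>G\<close> are entire functions into the upper half plane, hence constant.
  These coordinates of a point and of its image already determine the group element, so \<open>G\<close> is
  \<open>\<Lambda>\<close>-periodic, hence bounded, hence constant by Liouville, and therefore so is \<open>F\<close>.\<close>

(* The imports make [$] also denote indexing of formal power series, which makes vector
   indexing ambiguous. *)
no_notation fps_nth (infixl \<open>$\<close> 75)

lemma field_embedding_zero:
  assumes "field_embedding K \<sigma>" "0 \<in> K"
  shows "\<sigma> 0 = 0"
proof -
  have "\<sigma> (0 + 0) = \<sigma> 0 + \<sigma> 0"
    using assms unfolding field_embedding_def by blast
  then show ?thesis by simp
qed

lemma field_embedding_inj_on:
  assumes emb: "field_embedding K \<sigma>" and K: "subfield_C K"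
  shows "inj_on \<sigma> K"
proof
  fix x y assume x: "x \<in> K" and y: "y \<in> K" and eq: "\<sigma> x = \<sigma> y"
  show "x = y"
  proof (rule ccontr)
    assume "x \<noteq> y"
    have d: "x - y \<in> K" and inv: "inverse (x - y) \<in> K"
      using K x y \<open>x \<noteq> y\<close> unfolding subfield_C_def by auto
    have "\<sigma> ((x - y) + y) = \<sigma> (x - y) + \<sigma> y"
      using emb d y unfolding field_embedding_def by blast
    with eq have "\<sigma> (x - y) = 0" by simp
    moreover have "\<sigma> ((x - y) * inverse (x - y)) = \<sigma> (x - y) * \<sigma> (inverse (x - y))"
      using emb d inv unfolding field_embedding_def by blast
    ultimately have "\<sigma> 1 = 0"
      using \<open>x \<noteq> y\<close> by simp
    with emb show False
      unfolding field_embedding_def by simp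
  qed
qed

lemma field_embedding_nonzero:
  assumes "field_embedding K \<sigma>" "subfield_C K" "x \<in> K" "x \<noteq> 0"
  shows "\<sigma> x \<noteq> 0"
  using field_embedding_inj_on[OF assms(1,2)] field_embedding_zero[OF assms(1)] assms(2-4)
  unfolding subfield_C_def inj_on_def by metis

lemma has_derivative_ot_act:
  fixes emb :: "'m::finite \<Rightarrow> complex \<Rightarrow> complex"
  shows "(ot_act emb u a has_derivative (\<lambda>y. \<chi> i. emb i u * (y $ i))) (at y)"
proof -
  let ?M = "\<lambda>y::complex ^ 'm. \<chi> i. emb i u * (y $ i)"
  have "linear ?M"
    by (rule linearI) (simp_all add: vec_eq_iff algebra_simps scaleR_conv_of_real)
  then have "((\<lambda>y. ?M y + (\<chi> i. emb i a)) has_derivative ?M) (at y)"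
    by (intro has_derivative_add_const bounded_linear_imp_has_derivative
          linear_conv_bounded_linear[THEN iffD1])
  moreover have "(\<lambda>y. ?M y + (\<chi> i. emb i a)) = ot_act emb u a"
    by (simp add: fun_eq_iff vec_eq_iff ot_act_def)
  ultimately show ?thesis by simp
qed

lemma continuous_on_ot_act: "continuous_on S (ot_act emb u a)"
  unfolding ot_act_def by (intro continuous_on_vec_lambda continuous_intros)

lemma open_ot_domain: "open (ot_domain R)"
proof -
  have "open (\<Inter>i\<in>R. {z. 0 < Im (z $ i)})"
    by (intro open_INT finite ballI open_Collect_less continuous_intros)
  moreover have "ot_domain R = (\<Inter>i\<in>R. {z. 0 < Im (z $ i)})"
    unfolding ot_domain_def by auto
  ultimately show ?thesis by simp
qed

lemma mem_ot_orbit_iff: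
  "y \<in> ot_orbit K emb U z \<longleftrightarrow> (\<exists>u a. (u, a) \<in> ot_group K U \<and> y = ot_act emb u a z)"
  unfolding ot_orbit_def by auto

lemma ot_act_in_ot_orbit: "(u, a) \<in> ot_group K U \<Longrightarrow> ot_act emb u a z \<in> ot_orbit K emb U z"
  unfolding mem_ot_orbit_iff by blast

lemma holo_on_subset: "holo_on V g \<Longrightarrow> open N \<Longrightarrow> N \<subseteq> V \<Longrightarrow> holo_on N g"
  unfolding holo_on_def by blast

lemma holo_on_imp_continuous_on: "holo_on V g \<Longrightarrow> continuous_on V g"
  unfolding holo_on_def
  by (meson continuous_at_imp_continuous_on has_derivative_continuous)

lemma holo_on_ot_act:
  assumes "holo_on V g"
  shows "holo_on V (\<lambda>w. ot_act emb u a (g w))"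
  unfolding holo_on_def
proof (intro conjI ballI)
  show "open V"
    using assms unfolding holo_on_def by blast
  fix z assume "z \<in> V"
  then obtain L where L: "(g has_derivative L) (at z)" "\<forall>c w. L (c *s w) = c *s L w"
    using assms unfolding holo_on_def by blast
  let ?M = "\<lambda>y. \<chi> i. emb i u * (y $ i)"
  have "((\<lambda>w. ot_act emb u a (g w)) has_derivative (\<lambda>h. ?M (L h))) (at z)"
    using diff_chain_at[OF L(1) has_derivative_ot_act] by (simp add: o_def)
  moreover have "?M (L (c *s w)) = c *s ?M (L w)" for c w
    using L(2) by (simp add: vec_eq_iff algebra_simps)
  ultimately show "\<exists>L. ((\<lambda>w. ot_act emb u a (g w)) has_derivative L) (at z) \<and>
                       (\<forall>c w. L (c *s w) = c *s L w)" by blast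
qed

lemma holo_on_UNIV_if_locally:
  assumes "\<And>z. \<exists>N h. z \<in> N \<and> holo_on N h \<and> (\<forall>w\<in>N. G w = h w)"
  shows "holo_on UNIV G"
  unfolding holo_on_def
proof (intro conjI ballI open_UNIV)
  fix z
  obtain N h where N: "z \<in> N" "holo_on N h" "\<forall>w\<in>N. G w = h w"
    using assms by blast
  then obtain L where L: "(h has_derivative L) (at z)" "\<forall>c w. L (c *s w) = c *s L w"
    unfolding holo_on_def by blast
  have "(G has_derivative L) (at z)"
    by (rule has_derivative_transform_within_open[OF L(1), of N])
       (use N in \<open>auto simp: holo_on_def\<close>)
  with L(2) show "\<exists>L. (G has_derivative L) (at z) \<and> (\<forall>c w. L (c *s w) = c *s L w)"
    by blast
qed

lemma holomorphic_on_line_component: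
  fixes G :: "complex ^ 'n::finite \<Rightarrow> complex ^ 'k::finite"
  assumes "holo_on UNIV G"
  shows "(\<lambda>\<zeta>. G (w0 + \<zeta> *s v) $ k) holomorphic_on UNIV"
  unfolding holomorphic_on_open[OF open_UNIV]
proof
  fix \<zeta>0 :: complex
  obtain L where L: "(G has_derivative L) (at (w0 + \<zeta>0 *s v))" "\<forall>c w. L (c *s w) = c *s L w"
    using assms unfolding holo_on_def by blast
  have "linear (\<lambda>h::complex. h *s v)"
    by (rule linearI) (simp_all add: vec_eq_iff algebra_simps)
  then have "((\<lambda>\<zeta>. \<zeta> *s v + w0) has_derivative (\<lambda>h. h *s v)) (at \<zeta>0)"
    by (intro has_derivative_add_const bounded_linear_imp_has_derivative
          linear_conv_bounded_linear[THEN iffD1])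
  then have "((\<lambda>\<zeta>. w0 + \<zeta> *s v) has_derivative (\<lambda>h. h *s v)) (at \<zeta>0)"
    by (simp add: add.commute)
  from bounded_linear.has_derivative[OF bounded_linear_vec_nth diff_chain_at[OF this L(1)]]
  have "((\<lambda>\<zeta>. G (w0 + \<zeta> *s v) $ k) has_derivative (\<lambda>h. h * L v $ k)) (at \<zeta>0)"
    using L(2) by (simp add: o_def)
  then show "\<exists>f'. ((\<lambda>\<zeta>. G (w0 + \<zeta> *s v) $ k) has_field_derivative f') (at \<zeta>0)"
    unfolding has_field_derivative_def mult_commute_abs by blast
qed

text \<open>The Cayley transform maps the upper half plane into the unit disc, so Liouville applies.\<close>

lemma entire_Im_pos_constant:
  fixes f :: "complex \<Rightarrow> complex"
  assumes holo: "f holomorphic_on UNIV" and Im_pos: "\<And>z. Im (f z) > 0"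
  shows "f constant_on UNIV"
proof -
  have nz: "f z + \<i> \<noteq> 0" for z
  proof
    assume "f z + \<i> = 0"
    then have "Im (f z + \<i>) = 0" by simp
    with Im_pos[of z] show False by simp
  qed
  let ?q = "\<lambda>z. (f z - \<i>) / (f z + \<i>)"
  have "norm (?q z) \<le> 1" for z
  proof -
    have "(cmod (f z - \<i>))\<^sup>2 \<le> (cmod (f z + \<i>))\<^sup>2"
      using Im_pos[of z] unfolding cmod_power2 by (simp add: power2_eq_square algebra_simps)
    then have "cmod (f z - \<i>) \<le> cmod (f z + \<i>)"
      by (rule power2_le_imp_le) simp
    then show ?thesis
      using nz[of z] by (simp add: norm_divide divide_le_eq_1)
  qed
  then have "bounded (range ?q)"
    unfolding bounded_iff by blast
  moreover have "?q holomorphic_on UNIV"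
    by (intro holomorphic_intros holo nz)
  ultimately have "?q constant_on UNIV"
    using Liouville_theorem by blast
  then have q_eq: "?q z = ?q 0" for z
    unfolding constant_on_def by auto
  have "(f z - \<i>) * (f 0 + \<i>) = (f 0 - \<i>) * (f z + \<i>)" for z
    using q_eq[of z] nz[of z] nz[of 0] by (simp add: field_simps)
  then have "2 * \<i> * (f z - f 0) = 0" for z
    by (simp add: algebra_simps)
  then have "f z = f 0" for z
    by simp
  then show ?thesis
    unfolding constant_on_def by blast
qed

lemma component_eq_if_constant_on_line:
  fixes G :: "complex ^ 'n::finite \<Rightarrow> complex ^ 'k::finite"
  assumes "(\<lambda>\<zeta>. G (w0 + \<zeta> *s (w1 - w0)) $ k) constant_on UNIV"
  shows "G w1 $ k = G w0 $ k"
proof -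
  obtain c where "\<And>\<zeta>. G (w0 + \<zeta> *s (w1 - w0)) $ k = c"
    using assms unfolding constant_on_def by blast
  from this[of 1] this[of 0] show ?thesis by simp
qed

lemma holo_on_UNIV_component_constant_if_Im_pos:
  fixes G :: "complex ^ 'n::finite \<Rightarrow> complex ^ 'k::finite"
  assumes holo: "holo_on UNIV G" and Im_pos: "\<And>w. Im (G w $ k) > 0"
  shows "G w1 $ k = G w0 $ k"
proof (rule component_eq_if_constant_on_line[where G = G])
  show "(\<lambda>\<zeta>. G (w0 + \<zeta> *s (w1 - w0)) $ k) constant_on UNIV"
    by (rule entire_Im_pos_constant[OF holomorphic_on_line_component[OF holo] Im_pos])
qed

lemma holo_on_UNIV_bounded_constant:
  fixes G :: "complex ^ 'n::finite \<Rightarrow> complex ^ 'k::finite"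
  assumes holo: "holo_on UNIV G" and bounded: "bounded (range G)"
  shows "G w1 = G w0"
proof -
  have "G w1 $ k = G w0 $ k" for k
  proof (rule component_eq_if_constant_on_line[where G = G])
    have "range (\<lambda>\<zeta>. G (w0 + \<zeta> *s (w1 - w0)) $ k) \<subseteq> (\<lambda>x. x $ k) ` range G"
      by auto
    then have "bounded (range (\<lambda>\<zeta>. G (w0 + \<zeta> *s (w1 - w0)) $ k))"
      using bounded_linear_image[OF bounded bounded_linear_vec_nth] bounded_subset by blast
    then show "(\<lambda>\<zeta>. G (w0 + \<zeta> *s (w1 - w0)) $ k) constant_on UNIV"
      by (rule Liouville_theorem[OF holomorphic_on_line_component[OF holo]])
  qed
  then show ?thesis by (simp add: vec_eq_iff)
qed

lemma full_lattice_bounded_remainder: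
  assumes "full_lattice \<Lambda>"
  obtains M where "\<And>w. \<exists>l\<in>\<Lambda>. norm (w - l) \<le> M"
proof -
  obtain B where B: "independent B" "span B = UNIV"
      "\<Lambda> = {\<Sum>b\<in>B. of_int (c b) *\<^sub>R b | c. True}"
    using assms unfolding full_lattice_def by blast
  have "finite B"
    using B(1) by (rule independent_imp_finite)
  have "\<exists>l\<in>\<Lambda>. norm (w - l) \<le> (\<Sum>b\<in>B. norm b)" for w
  proof -
    obtain x where x: "w = (\<Sum>b\<in>B. x b *\<^sub>R b)"
      using span_finite[OF \<open>finite B\<close>] B(2) by auto
    define l where "l = (\<Sum>b\<in>B. of_int \<lfloor>x b\<rfloor> *\<^sub>R b)"
    have "l \<in> \<Lambda>"
      unfolding B(3) l_def by (intro CollectI exI[of _ "\<lambda>b. \<lfloor>x b\<rfloor>"]) simp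
    have "w - l = (\<Sum>b\<in>B. (x b - of_int \<lfloor>x b\<rfloor>) *\<^sub>R b)"
      unfolding x l_def by (simp add: sum_subtractf scaleR_diff_left)
    also have "norm \<dots> \<le> (\<Sum>b\<in>B. norm ((x b - of_int \<lfloor>x b\<rfloor>) *\<^sub>R b))"
      by (rule norm_sum)
    also have "\<dots> \<le> (\<Sum>b\<in>B. norm b)"
    proof (rule sum_mono)
      fix b
      have "\<bar>x b - of_int \<lfloor>x b\<rfloor>\<bar> \<le> 1" by linarith
      then show "norm ((x b - of_int \<lfloor>x b\<rfloor>) *\<^sub>R b) \<le> norm b"
        by (simp add: mult_left_le_one_le)
    qed
    finally show ?thesis
      using \<open>l \<in> \<Lambda>\<close> by blast
  qed
  then show thesis by (rule that)
qed

lemma bounded_range_if_periodic: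
  assumes "full_lattice \<Lambda>" "continuous_on UNIV G" "\<And>w l. l \<in> \<Lambda> \<Longrightarrow> G (w + l) = G w"
  shows "bounded (range G)"
proof -
  obtain M where M: "\<And>w. \<exists>l\<in>\<Lambda>. norm (w - l) \<le> M"
    using full_lattice_bounded_remainder[OF assms(1)] by blast
  have "range G \<subseteq> G ` cball 0 M"
  proof
    fix y assume "y \<in> range G"
    then obtain w where "y = G w" by blast
    moreover obtain l where "l \<in> \<Lambda>" "norm (w - l) \<le> M"
      using M by blast
    ultimately show "y \<in> G ` cball 0 M"
      using assms(3)[of l "w - l"] by (intro image_eqI[of _ _ "w - l"]) auto
  qed
  moreover have "compact (G ` cball 0 M)"
    by (intro compact_continuous_image continuous_on_subset[OF assms(2)]) auto
  ultimately show ?thesis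
    using bounded_subset compact_imp_bounded by blast
qed

locale ot_manifold =
  fixes K :: "complex set" and R :: "'m::finite set"
    and emb :: "'m \<Rightarrow> complex \<Rightarrow> complex" and U :: "complex set"
  assumes number_field: "number_field K"
    and embedding_data: "embedding_data K R emb"
    and real_places_nonempty: "R \<noteq> {}"
    and admissible: "admissible K R emb U"
begin

lemma subfield: "subfield_C K"
  using number_field unfolding number_field_def by blast

lemma field_embedding_emb: "field_embedding K (emb i)"
  using embedding_data unfolding embedding_data_def by blast

lemma ot_group_in_field:
  assumes "(u, a) \<in> ot_group K U"
  shows "u \<in> K" "a \<in> K"
  using assms admissible
  unfolding ot_group_def admissible_def totally_positive_units_def ring_of_integers_def by auto

lemma ot_group_real_place:
  assumes "(u, a) \<in> ot_group K U" "i \<in> R"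
  obtains r s where "r > 0" "emb i u = of_real r" "emb i a = of_real s"
proof -
  have "u \<in> totally_positive_units K R emb"
    using assms(1) admissible unfolding ot_group_def admissible_def by blast
  then have "emb i u \<in> \<real>" "Re (emb i u) > 0"
    using assms(2) unfolding totally_positive_units_def by auto
  moreover have "emb i a \<in> \<real>"
    using embedding_data ot_group_in_field[OF assms(1)] assms(2) unfolding embedding_data_def by blast
  ultimately show thesis
    using that[of "Re (emb i u)" "Re (emb i a)"] by (simp add: complex_is_Real_iff)
qed

lemma emb_ot_group_nonzero:
  assumes "(u, a) \<in> ot_group K U"
  shows "emb i u \<noteq> 0"
proof -
  obtain i0 where "i0 \<in> R"
    using real_places_nonempty by blast
  then obtain r where "r > 0" "emb i0 u = of_real r"
    by (rule ot_group_real_place[OF assms])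
  then have "emb i0 u \<noteq> 0"
    by simp
  then have "u \<noteq> 0"
    using field_embedding_zero[OF field_embedding_emb] subfield unfolding subfield_C_def by auto
  then show ?thesis
    using field_embedding_nonzero[OF field_embedding_emb subfield ot_group_in_field(1)[OF assms]]
    by blast
qed

lemma ot_act_in_ot_domain:
  assumes "y \<in> ot_domain R" "(u, a) \<in> ot_group K U"
  shows "ot_act emb u a y \<in> ot_domain R"
  unfolding ot_domain_def
proof (intro CollectI ballI)
  fix i assume "i \<in> R"
  obtain r s where "r > 0" "emb i u = of_real r" "emb i a = of_real s"
    by (rule ot_group_real_place[OF assms(2) \<open>i \<in> R\<close>])
  moreover have "Im (y $ i) > 0"
    using assms(1) \<open>i \<in> R\<close> unfolding ot_domain_def by blast
  ultimately show "Im (ot_act emb u a y $ i) > 0"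
    unfolding ot_act_def by simp
qed

text \<open>The imaginary parts of the real-place coordinates alone determine \<open>u\<close>, and then the
  real parts determine \<open>a\<close>.\<close>

lemma ot_group_eq_if_real_places_eq:
  assumes y: "y \<in> ot_domain R" and g: "(u, a) \<in> ot_group K U" and g': "(u', a') \<in> ot_group K U"
    and eq: "\<forall>i\<in>R. ot_act emb u a y $ i = ot_act emb u' a' y $ i"
  shows "u = u' \<and> a = a'"
proof -
  obtain i where i: "i \<in> R"
    using real_places_nonempty by blast
  obtain r s where rs: "emb i u = of_real r" "emb i a = of_real s"
    by (rule ot_group_real_place[OF g i])
  obtain r' s' where rs': "emb i u' = of_real r'" "emb i a' = of_real s'"
    by (rule ot_group_real_place[OF g' i])
  have act_eq: "emb i u * y $ i + emb i a = emb i u' * y $ i + emb i a'"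
    using eq i unfolding ot_act_def by simp
  then have "Im (emb i u * y $ i + emb i a) = Im (emb i u' * y $ i + emb i a')"
    by simp
  then have "r * Im (y $ i) = r' * Im (y $ i)"
    using rs rs' by simp
  moreover have "Im (y $ i) > 0"
    using y i unfolding ot_domain_def by blast
  ultimately have "emb i u = emb i u'"
    using rs rs' by simp
  moreover from this have "emb i a = emb i a'"
    using act_eq by simp
  ultimately show ?thesis
    using field_embedding_inj_on[OF field_embedding_emb subfield]
      ot_group_in_field[OF g] ot_group_in_field[OF g'] unfolding inj_on_def by blast
qed

lemma inj_ot_act:
  assumes "(u, a) \<in> ot_group K U"
  shows "inj (ot_act emb u a)"
  using emb_ot_group_nonzero[OF assms] by (intro injI) (simp add: ot_act_def vec_eq_iff)

lemma ot_orbit_self: "z \<in> ot_orbit K emb U z"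
proof -
  have "(1, 0) \<in> ot_group K U"
    using admissible subfield
    unfolding ot_group_def admissible_def mult_subgroup_def ring_of_integers_def subfield_C_def
    by simp
  moreover have "emb i 1 = 1" "emb i 0 = 0" for i
    using field_embedding_emb[of i] field_embedding_zero[OF field_embedding_emb] subfield
    unfolding field_embedding_def subfield_C_def by auto
  then have "ot_act emb 1 0 z = z"
    by (simp add: ot_act_def vec_eq_iff)
  ultimately show ?thesis
    unfolding mem_ot_orbit_iff by metis
qed

text \<open>By proper discontinuity only finitely many group elements map the compact set
  \<open>cball y\<^sub>0 r \<union> cball z\<^sub>0 r\<close> (\<open>z\<^sub>0\<close> the image of \<open>y\<^sub>0\<close>) to a set meeting it; by freeness each of
  them other than \<open>(u\<^sub>0, a\<^sub>0)\<close> moves \<open>y\<^sub>0\<close> off \<open>z\<^sub>0\<close>, hence by continuity keeps a whole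
  neighbourhood of \<open>y\<^sub>0\<close> away from \<open>z\<^sub>0\<close>.\<close>

lemma ot_act_isolated:
  assumes y0: "y0 \<in> ot_domain R" and g0: "(u0, a0) \<in> ot_group K U"
  obtains e where "e > 0"
    "\<And>y u a. dist y y0 < e \<Longrightarrow> (u, a) \<in> ot_group K U \<Longrightarrow>
       dist (ot_act emb u a y) (ot_act emb u0 a0 y0) < e \<Longrightarrow> u = u0 \<and> a = a0"
proof -
  define z0 where "z0 = ot_act emb u0 a0 y0"
  have "z0 \<in> ot_domain R"
    unfolding z0_def using y0 g0 by (rule ot_act_in_ot_domain)
  obtain r where r: "r > 0" "cball y0 r \<subseteq> ot_domain R" "cball z0 r \<subseteq> ot_domain R"
  proof -
    obtain r1 where "r1 > 0" "cball y0 r1 \<subseteq> ot_domain R"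
      using open_ot_domain y0 open_contains_cball by blast
    moreover obtain r2 where "r2 > 0" "cball z0 r2 \<subseteq> ot_domain R"
      using open_ot_domain \<open>z0 \<in> ot_domain R\<close> open_contains_cball by blast
    ultimately show thesis
      by (intro that[of "min r1 r2"]) (force simp: subset_eq)+
  qed
  define C where "C = cball y0 r \<union> cball z0 r"
  define E where "E = {(u, a) \<in> ot_group K U. ot_act emb u a ` C \<inter> C \<noteq> {}}"
  have "compact C" "C \<subseteq> ot_domain R"
    using r unfolding C_def by auto
  then have "finite E"
    using admissible unfolding admissible_def E_def by blast
  have far: "\<forall>\<^sub>F e in at_right 0. \<forall>y. dist y y0 < e \<longrightarrow> e \<le> dist (ot_act emb u a y) z0"
    if g: "(u, a) \<in> ot_group K U" and ne: "(u, a) \<noteq> (u0, a0)" for u a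
  proof -
    define \<delta> where "\<delta> = dist (ot_act emb u a y0) z0"
    have "ot_act emb u a y0 \<noteq> z0"
      using ot_group_eq_if_real_places_eq[OF y0 g g0] ne unfolding z0_def by auto
    then have "\<delta> > 0"
      unfolding \<delta>_def by simp
    then obtain d where d: "d > 0"
      "\<And>y. dist y y0 < d \<Longrightarrow> dist (ot_act emb u a y) (ot_act emb u a y0) < \<delta> / 2"
      using continuous_on_ot_act[of UNIV emb u a] unfolding continuous_on_iff
      by (metis UNIV_I half_gt_zero)
    have "e \<le> dist (ot_act emb u a y) z0" if "e < min d (\<delta> / 2)" "dist y y0 < e" for e y
    proof -
      have "\<delta> \<le> dist (ot_act emb u a y) (ot_act emb u a y0) + dist (ot_act emb u a y) z0"
        unfolding \<delta>_def by (metis dist_commute dist_triangle)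
      then show ?thesis
        using d(2)[of y] that by linarith
    qed
    then show ?thesis
      unfolding eventually_at_right_field using d(1) \<open>\<delta> > 0\<close>
      by (intro exI[of _ "min d (\<delta> / 2)"]) auto
  qed
  have "\<forall>\<^sub>F e in at_right 0. e < r"
    unfolding eventually_at_right_field using r(1) by blast
  moreover have "\<forall>\<^sub>F e in at_right 0.
      \<forall>\<gamma>\<in>E - {(u0, a0)}. \<forall>y. dist y y0 < e \<longrightarrow> e \<le> dist (ot_act emb (fst \<gamma>) (snd \<gamma>) y) z0"
  proof (rule eventually_ball_finite)
    show "finite (E - {(u0, a0)})"
      using \<open>finite E\<close> by simp
    show "\<forall>\<gamma>\<in>E - {(u0, a0)}. \<forall>\<^sub>F e in at_right 0.
        \<forall>y. dist y y0 < e \<longrightarrow> e \<le> dist (ot_act emb (fst \<gamma>) (snd \<gamma>) y) z0"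
    proof
      fix \<gamma> assume "\<gamma> \<in> E - {(u0, a0)}"
      then obtain u a where \<gamma>: "\<gamma> = (u, a)" "(u, a) \<in> ot_group K U" "(u, a) \<noteq> (u0, a0)"
        unfolding E_def by auto
      show "\<forall>\<^sub>F e in at_right 0.
          \<forall>y. dist y y0 < e \<longrightarrow> e \<le> dist (ot_act emb (fst \<gamma>) (snd \<gamma>) y) z0"
        using far[OF \<gamma>(2,3)] \<gamma>(1) by simp
    qed
  qed
  ultimately have "\<forall>\<^sub>F e in at_right 0. e < r \<and>
      (\<forall>\<gamma>\<in>E - {(u0, a0)}. \<forall>y. dist y y0 < e \<longrightarrow> e \<le> dist (ot_act emb (fst \<gamma>) (snd \<gamma>) y) z0)"
    by (rule eventually_conj)
  then obtain b where b: "b > 0" "\<And>e. 0 < e \<Longrightarrow> e < b \<Longrightarrow> e < r \<and>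
      (\<forall>\<gamma>\<in>E - {(u0, a0)}. \<forall>y. dist y y0 < e \<longrightarrow> e \<le> dist (ot_act emb (fst \<gamma>) (snd \<gamma>) y) z0)"
    unfolding eventually_at_right_field by blast
  define e where "e = b / 2"
  have e: "e > 0" "e < r"
    "\<forall>\<gamma>\<in>E - {(u0, a0)}. \<forall>y. dist y y0 < e \<longrightarrow> e \<le> dist (ot_act emb (fst \<gamma>) (snd \<gamma>) y) z0"
    using b(2)[of e] b(1) unfolding e_def by auto
  show thesis
  proof (rule that[OF e(1)])
    fix y u a
    assume y: "dist y y0 < e" and g: "(u, a) \<in> ot_group K U"
      and near: "dist (ot_act emb u a y) (ot_act emb u0 a0 y0) < e"
    have "y \<in> C" "ot_act emb u a y \<in> C"
      using y near e(2) unfolding C_def z0_def by (auto simp: dist_commute)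
    then have "(u, a) \<in> E"
      unfolding E_def using g by blast
    show "u = u0 \<and> a = a0"
    proof (rule ccontr)
      assume "\<not> (u = u0 \<and> a = a0)"
      with \<open>(u, a) \<in> E\<close> have "(u, a) \<in> E - {(u0, a0)}"
        by auto
      then have "e \<le> dist (ot_act emb u a y) z0"
        using e(3)[rule_format, OF _ y] by fastforce
      with near show False
        unfolding z0_def by simp
    qed
  qed
qed

definition local_lift ::
    "(complex ^ 'd::finite \<Rightarrow> (complex ^ 'm) set) \<Rightarrow> (complex ^ 'd) set \<Rightarrow> (complex ^ 'd \<Rightarrow> complex ^ 'm) \<Rightarrow> bool"
  where "local_lift F V g \<longleftrightarrow>
    holo_on V g \<and> g ` V \<subseteq> ot_domain R \<and> (\<forall>w\<in>V. F w = ot_orbit K emb U (g w))"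

definition ot_graph :: "(complex ^ 'd::finite \<Rightarrow> (complex ^ 'm) set) \<Rightarrow> ((complex ^ 'd) \<times> (complex ^ 'm)) set"
  where "ot_graph F = {(w, y). y \<in> ot_domain R \<and> y \<in> F w}"

definition ot_sheet ::
    "(complex ^ 'd::finite) set \<Rightarrow> (complex ^ 'd \<Rightarrow> complex ^ 'm) \<Rightarrow> complex \<Rightarrow> complex \<Rightarrow> ((complex ^ 'd) \<times> (complex ^ 'm)) set"
  where "ot_sheet V g u a = (\<lambda>w. (w, ot_act emb u a (g w))) ` V"

lemma ot_sheet_subset_ot_graph:
  assumes "local_lift F V g" "(u, a) \<in> ot_group K U"
  shows "ot_sheet V g u a \<subseteq> ot_graph F"
proof
  fix p assume "p \<in> ot_sheet V g u a"
  then obtain w where w: "w \<in> V" "p = (w, ot_act emb u a (g w))"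
    unfolding ot_sheet_def by blast
  then have "g w \<in> ot_domain R" "F w = ot_orbit K emb U (g w)"
    using assms(1) unfolding local_lift_def by auto
  then have "ot_act emb u a (g w) \<in> ot_domain R" "ot_act emb u a (g w) \<in> F w"
    using ot_act_in_ot_domain[OF _ assms(2)] ot_act_in_ot_orbit[OF assms(2)] by auto
  then show "p \<in> ot_graph F"
    using w(2) unfolding ot_graph_def by simp
qed

lemma ot_graph_over_local_lift:
  assumes lift: "local_lift F V g"
  shows "ot_graph F \<inter> fst -` V = (\<Union>(u, a)\<in>ot_group K U. ot_sheet V g u a)"
proof (intro subsetI equalityI)
  fix p assume "p \<in> ot_graph F \<inter> fst -` V"
  then obtain w y where p: "p = (w, y)" "w \<in> V" "y \<in> F w"
    unfolding ot_graph_def by auto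
  then have "y \<in> ot_orbit K emb U (g w)"
    using lift unfolding local_lift_def by auto
  then obtain u a where ua: "(u, a) \<in> ot_group K U" and "y = ot_act emb u a (g w)"
    unfolding mem_ot_orbit_iff by blast
  then have "p \<in> ot_sheet V g u a"
    using p unfolding ot_sheet_def by blast
  with ua show "p \<in> (\<Union>(u, a)\<in>ot_group K U. ot_sheet V g u a)"
    by (intro UN_I[of "(u, a)"]) simp_all
next
  fix p assume "p \<in> (\<Union>(u, a)\<in>ot_group K U. ot_sheet V g u a)"
  then obtain u a where "(u, a) \<in> ot_group K U" "p \<in> ot_sheet V g u a"
    by auto
  then show "p \<in> ot_graph F \<inter> fst -` V"
    using ot_sheet_subset_ot_graph[OF lift] unfolding ot_sheet_def by auto
qed

lemma openin_ot_sheet: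
  assumes lift: "local_lift F V g" and g: "(u, a) \<in> ot_group K U"
  shows "openin (top_of_set (ot_graph F)) (ot_sheet V g u a)"
  unfolding openin_euclidean_subtopology_iff
proof (intro conjI ballI)
  show "ot_sheet V g u a \<subseteq> ot_graph F"
    using lift g by (rule ot_sheet_subset_ot_graph)
  have "open V" and cont: "continuous_on V g"
    using lift holo_on_imp_continuous_on unfolding local_lift_def holo_on_def by auto
  fix p assume "p \<in> ot_sheet V g u a"
  then obtain w1 where w1: "w1 \<in> V" "p = (w1, ot_act emb u a (g w1))"
    unfolding ot_sheet_def by blast
  have "g w1 \<in> ot_domain R"
    using lift w1(1) unfolding local_lift_def by blast
  then obtain e where e: "e > 0" "\<And>y u' a'. dist y (g w1) < e \<Longrightarrow> (u', a') \<in> ot_group K U \<Longrightarrow>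
      dist (ot_act emb u' a' y) (ot_act emb u a (g w1)) < e \<Longrightarrow> u' = u \<and> a' = a"
    using g by (rule ot_act_isolated) blast
  obtain \<delta> where \<delta>: "\<delta> > 0" "\<forall>w\<in>V. dist w w1 < \<delta> \<longrightarrow> dist (g w) (g w1) < e"
    using cont w1(1) e(1) unfolding continuous_on_iff by blast
  obtain \<rho> where \<rho>: "\<rho> > 0" "ball w1 \<rho> \<subseteq> V"
    using \<open>open V\<close> w1(1) open_contains_ball by blast
  show "\<exists>\<epsilon>>0. \<forall>q\<in>ot_graph F. dist q p < \<epsilon> \<longrightarrow> q \<in> ot_sheet V g u a"
  proof (intro exI[of _ "min (min e \<delta>) \<rho>"] conjI ballI impI)
    fix q assume q: "q \<in> ot_graph F" "dist q p < min (min e \<delta>) \<rho>"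
    obtain w y where wy: "q = (w, y)" "y \<in> F w"
      using q(1) unfolding ot_graph_def by blast
    have dw: "dist w w1 < min (min e \<delta>) \<rho>" and dy: "dist y (ot_act emb u a (g w1)) < e"
      using dist_fst_le[of q p] dist_snd_le[of q p] q(2) wy(1) w1(2) by auto
    then have "w \<in> V"
      using \<rho>(2) by (auto simp: dist_commute subset_eq)
    then have "dist (g w) (g w1) < e"
      using \<delta>(2) dw by auto
    have "y \<in> ot_orbit K emb U (g w)"
      using lift \<open>w \<in> V\<close> wy(2) unfolding local_lift_def by auto
    then obtain u' a' where ua': "(u', a') \<in> ot_group K U" "y = ot_act emb u' a' (g w)"
      unfolding mem_ot_orbit_iff by blast
    then have "u' = u \<and> a' = a"
      using e(2)[OF \<open>dist (g w) (g w1) < e\<close> ua'(1)] dy by simp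
    then show "q \<in> ot_sheet V g u a"
      using ua'(2) wy(1) \<open>w \<in> V\<close> unfolding ot_sheet_def by blast
  qed (use e(1) \<delta>(1) \<rho>(1) in auto)
qed

lemma disjnt_ot_sheets:
  assumes lift: "local_lift F V g"
    and g1: "(u1, a1) \<in> ot_group K U" and g2: "(u2, a2) \<in> ot_group K U"
    and ne: "(u1, a1) \<noteq> (u2, a2)"
  shows "disjnt (ot_sheet V g u1 a1) (ot_sheet V g u2 a2)"
proof (rule ccontr)
  assume "\<not> disjnt (ot_sheet V g u1 a1) (ot_sheet V g u2 a2)"
  then obtain w where "w \<in> V" and act_eq: "ot_act emb u1 a1 (g w) = ot_act emb u2 a2 (g w)"
    unfolding ot_sheet_def disjnt_def by auto
  then have "g w \<in> ot_domain R"
    using lift unfolding local_lift_def by blast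
  then have "u1 = u2 \<and> a1 = a2"
    using ot_group_eq_if_real_places_eq[OF _ g1 g2] act_eq by simp
  with ne show False
    by simp
qed

lemma homeomorphism_ot_sheet:
  assumes "local_lift F V g"
  shows "homeomorphism (ot_sheet V g u a) V fst (\<lambda>w. (w, ot_act emb u a (g w)))"
proof -
  have "continuous_on V g"
    using assms holo_on_imp_continuous_on unfolding local_lift_def by blast
  then have "continuous_on V (\<lambda>w. (w, ot_act emb u a (g w)))"
    by (intro continuous_intros continuous_on_compose2[OF continuous_on_ot_act]) auto
  then show ?thesis
    unfolding homeomorphism_def ot_sheet_def
    by (auto simp: image_image intro: continuous_on_fst[OF continuous_on_id])
qed

lemma covering_space_ot_graph:
  fixes F :: "complex ^ 'd::finite \<Rightarrow> (complex ^ 'm) set"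
  assumes lifts: "\<And>z. \<exists>V g. z \<in> V \<and> local_lift F V g"
  shows "covering_space (ot_graph F) fst UNIV"
proof
  show "continuous_on (ot_graph F) fst"
    by (intro continuous_intros)
  have "w \<in> fst ` ot_graph F" for w
  proof -
    obtain V g where "w \<in> V" "local_lift F V g"
      using lifts by blast
    then have "(w, g w) \<in> ot_graph F"
      using ot_orbit_self unfolding local_lift_def ot_graph_def by auto
    then show ?thesis
      by force
  qed
  then show "fst ` ot_graph F = UNIV"
    by blast
  fix w0 :: "complex ^ 'd"
  obtain V g where "w0 \<in> V" and lift: "local_lift F V g"
    using lifts by blast
  let ?v = "(\<lambda>(u, a). ot_sheet V g u a) ` ot_group K U"
  show "\<exists>T. w0 \<in> T \<and> openin (top_of_set UNIV) T \<and>
      (\<exists>v. \<Union>v = ot_graph F \<inter> fst -` T \<and> (\<forall>S\<in>v. openin (top_of_set (ot_graph F)) S) \<and>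
           pairwise disjnt v \<and> (\<forall>S\<in>v. \<exists>q. homeomorphism S T fst q))"
  proof (intro exI conjI)
    show "w0 \<in> V" by fact
    show "openin (top_of_set UNIV) V"
      using lift unfolding local_lift_def holo_on_def by simp
    show "\<Union>?v = ot_graph F \<inter> fst -` V"
      using ot_graph_over_local_lift[OF lift] by simp
    show "\<forall>S\<in>?v. openin (top_of_set (ot_graph F)) S"
    proof
      fix S assume "S \<in> ?v"
      then obtain u a where "(u, a) \<in> ot_group K U" "S = ot_sheet V g u a"
        by auto
      then show "openin (top_of_set (ot_graph F)) S"
        using openin_ot_sheet[OF lift] by blast
    qed
    show "pairwise disjnt ?v"
    proof (rule pairwiseI)
      fix S1 S2 assume "S1 \<in> ?v" "S2 \<in> ?v" "S1 \<noteq> S2"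
      then obtain u1 a1 u2 a2 where "(u1, a1) \<in> ot_group K U" "S1 = ot_sheet V g u1 a1"
          "(u2, a2) \<in> ot_group K U" "S2 = ot_sheet V g u2 a2" "(u1, a1) \<noteq> (u2, a2)"
        by auto
      then show "disjnt S1 S2"
        using disjnt_ot_sheets[OF lift] by blast
    qed
    show "\<forall>S\<in>?v. \<exists>q. homeomorphism S V fst q"
    proof
      fix S assume "S \<in> ?v"
      then obtain u a where "S = ot_sheet V g u a"
        by auto
      then show "\<exists>q. homeomorphism S V fst q"
        using homeomorphism_ot_sheet[OF lift] by blast
    qed
  qed
qed

lemma ot_graph_section:
  fixes F :: "complex ^ 'd::finite \<Rightarrow> (complex ^ 'm) set"
  assumes "\<And>z. \<exists>V g. z \<in> V \<and> local_lift F V g"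
  obtains G where "continuous_on UNIV G" "\<And>w. G w \<in> ot_domain R" "\<And>w. G w \<in> F w"
proof -
  have simply_connected: "simply_connected (UNIV :: (complex ^ 'd) set)"
    by (rule convex_imp_simply_connected) simp
  have id_maps: "(\<lambda>w. w) \<in> (UNIV :: (complex ^ 'd) set) \<rightarrow> UNIV"
    by simp
  show thesis
  proof (rule covering_space_lift[OF covering_space_ot_graph[OF assms] simply_connected
        locally_path_connected_UNIV continuous_on_id id_maps])
    fix h assume h: "continuous_on UNIV h" "h \<in> UNIV \<rightarrow> ot_graph F"
      "\<And>w. w \<in> UNIV \<Longrightarrow> fst (h w) = w"
    have "h w = (w, snd (h w))" for w
      using h(3)[of w] by (metis UNIV_I prod.collapse)
    moreover have "h w \<in> ot_graph F" for w
      using h(2) by (simp add: Pi_iff)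
    ultimately have "(w, snd (h w)) \<in> ot_graph F" for w
      by metis
    moreover have "continuous_on UNIV (\<lambda>w. snd (h w))"
      using h(1) by (intro continuous_intros)
    ultimately show thesis
      using that unfolding ot_graph_def by blast
  qed
qed

lemma ot_section_locally_ot_act:
  assumes G: "continuous_on UNIV G" "\<And>w. G w \<in> F w"
    and lift: "local_lift F V g" and "w0 \<in> V"
  obtains N u a where "open N" "w0 \<in> N" "N \<subseteq> V" "(u, a) \<in> ot_group K U"
    "\<And>w. w \<in> N \<Longrightarrow> G w = ot_act emb u a (g w)"
proof -
  have "open V" and cont: "continuous_on V g" and "g w0 \<in> ot_domain R"
    and orbit: "\<And>w. w \<in> V \<Longrightarrow> F w = ot_orbit K emb U (g w)"
    using lift \<open>w0 \<in> V\<close> holo_on_imp_continuous_on unfolding local_lift_def holo_on_def by auto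
  have "G w0 \<in> ot_orbit K emb U (g w0)"
    using G(2)[of w0] orbit[OF \<open>w0 \<in> V\<close>] by simp
  then obtain u a where ua: "(u, a) \<in> ot_group K U" "G w0 = ot_act emb u a (g w0)"
    unfolding mem_ot_orbit_iff by blast
  from \<open>g w0 \<in> ot_domain R\<close> obtain e where e: "e > 0"
    "\<And>y u' a'. dist y (g w0) < e \<Longrightarrow> (u', a') \<in> ot_group K U \<Longrightarrow>
       dist (ot_act emb u' a' y) (ot_act emb u a (g w0)) < e \<Longrightarrow> u' = u \<and> a' = a"
    using ua(1) by (rule ot_act_isolated) blast
  obtain d1 where d1: "d1 > 0" "\<forall>w\<in>V. dist w w0 < d1 \<longrightarrow> dist (g w) (g w0) < e"
    using cont \<open>w0 \<in> V\<close> e(1) unfolding continuous_on_iff by blast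
  obtain d2 where d2: "d2 > 0" "\<forall>w\<in>UNIV. dist w w0 < d2 \<longrightarrow> dist (G w) (G w0) < e"
    using G(1) e(1) unfolding continuous_on_iff by blast
  obtain \<rho> where \<rho>: "\<rho> > 0" "ball w0 \<rho> \<subseteq> V"
    using \<open>open V\<close> \<open>w0 \<in> V\<close> open_contains_ball by blast
  define N where "N = ball w0 (min (min d1 d2) \<rho>)"
  show thesis
  proof (rule that[of N u a])
    show "open N" "w0 \<in> N"
      unfolding N_def using d1(1) d2(1) \<rho>(1) by auto
    show "N \<subseteq> V"
      unfolding N_def using \<rho>(2) by auto
    show "(u, a) \<in> ot_group K U"
      by (fact ua(1))
    fix w assume "w \<in> N"
    then have "w \<in> V" "dist w w0 < d1" "dist w w0 < d2"
      using \<open>N \<subseteq> V\<close> unfolding N_def by (auto simp: dist_commute)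
    then have near: "dist (g w) (g w0) < e" "dist (G w) (G w0) < e"
      using d1(2) d2(2) by auto
    have "G w \<in> ot_orbit K emb U (g w)"
      using G(2)[of w] orbit[OF \<open>w \<in> V\<close>] by simp
    then obtain u' a' where ua': "(u', a') \<in> ot_group K U" "G w = ot_act emb u' a' (g w)"
      unfolding mem_ot_orbit_iff by blast
    then have "u' = u \<and> a' = a"
      using e(2)[OF near(1) ua'(1)] near(2) ua(2) by simp
    then show "G w = ot_act emb u a (g w)"
      using ua'(2) by simp
  qed
qed

lemma holo_on_ot_section:
  assumes lifts: "\<And>z. \<exists>V g. z \<in> V \<and> local_lift F V g"
    and G: "continuous_on UNIV G" "\<And>w. G w \<in> F w"
  shows "holo_on UNIV G"
proof (rule holo_on_UNIV_if_locally)
  fix z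
  obtain V g where "z \<in> V" and lift: "local_lift F V g"
    using lifts by blast
  obtain N u a where N: "open N" "z \<in> N" "N \<subseteq> V" "(u, a) \<in> ot_group K U"
      "\<And>w. w \<in> N \<Longrightarrow> G w = ot_act emb u a (g w)"
    by (rule ot_section_locally_ot_act[OF G lift \<open>z \<in> V\<close>]) blast
  have "holo_on V g"
    using lift unfolding local_lift_def by blast
  then have "holo_on N (\<lambda>w. ot_act emb u a (g w))"
    by (intro holo_on_ot_act holo_on_subset[OF _ N(1,3)])
  then show "\<exists>N h. z \<in> N \<and> holo_on N h \<and> (\<forall>w\<in>N. G w = h w)"
    using N(2,5) by blast
qed

lemma ot_section_periodic:
  assumes lifts: "\<And>z. \<exists>V g. z \<in> V \<and> local_lift F V g"
    and periodic: "\<And>z l. l \<in> \<Lambda> \<Longrightarrow> F (z + l) = F z"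
    and G: "\<And>w. G w \<in> F w"
    and real_places_const: "\<And>w w' i. i \<in> R \<Longrightarrow> G w $ i = G w' $ i"
    and "l \<in> \<Lambda>"
  shows "G (w + l) = G w"
proof -
  obtain V g where "w \<in> V" "local_lift F V g"
    using lifts by blast
  then have "g w \<in> ot_domain R" and orbit: "F w = ot_orbit K emb U (g w)"
    unfolding local_lift_def by auto
  have "G (w + l) \<in> ot_orbit K emb U (g w)"
    using G[of "w + l"] periodic[OF \<open>l \<in> \<Lambda>\<close>] orbit by simp
  then obtain u1 a1 where ua1: "(u1, a1) \<in> ot_group K U" "G (w + l) = ot_act emb u1 a1 (g w)"
    unfolding mem_ot_orbit_iff by blast
  have "G w \<in> ot_orbit K emb U (g w)"
    using G[of w] orbit by simp
  then obtain u2 a2 where ua2: "(u2, a2) \<in> ot_group K U" "G w = ot_act emb u2 a2 (g w)"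
    unfolding mem_ot_orbit_iff by blast
  have "\<forall>i\<in>R. ot_act emb u1 a1 (g w) $ i = ot_act emb u2 a2 (g w) $ i"
    using real_places_const[of _ "w + l" w] ua1(2) ua2(2) by simp
  then have "u1 = u2 \<and> a1 = a2"
    by (rule ot_group_eq_if_real_places_eq[OF \<open>g w \<in> ot_domain R\<close> ua1(1) ua2(1)])
  then show ?thesis
    using ua1(2) ua2(2) by simp
qed

lemma constant_if_ot_section_constant:
  assumes lifts: "\<And>z. \<exists>V g. z \<in> V \<and> local_lift F V g"
    and G: "continuous_on UNIV G" "\<And>w. G w \<in> F w"
    and G_const: "\<And>w w'. G w = G w'"
  shows "F constant_on UNIV"
proof (rule locally_constant_imp_constant[OF connected_UNIV])
  fix z
  obtain V g where "z \<in> V" and lift: "local_lift F V g"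
    using lifts by blast
  then have orbit: "\<And>w. w \<in> V \<Longrightarrow> F w = ot_orbit K emb U (g w)"
    unfolding local_lift_def by blast
  obtain N u a where N: "open N" "z \<in> N" "N \<subseteq> V" "(u, a) \<in> ot_group K U"
      "\<And>w. w \<in> N \<Longrightarrow> G w = ot_act emb u a (g w)"
    by (rule ot_section_locally_ot_act[OF G lift \<open>z \<in> V\<close>]) blast
  have "F w = F z" if "w \<in> N" for w
  proof -
    have "ot_act emb u a (g w) = ot_act emb u a (g z)"
      using N(5)[OF that] N(5)[OF N(2)] G_const[of w z] by simp
    then have "g w = g z"
      using inj_ot_act[OF N(4)] unfolding inj_def by blast
    moreover have "w \<in> V"
      using N(3) that by blast
    ultimately show ?thesis
      using orbit[OF \<open>z \<in> V\<close>] orbit[OF \<open>w \<in> V\<close>] by simp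
  qed
  moreover have "openin (top_of_set UNIV) N"
    using N(1) by simp
  ultimately show "\<exists>T. openin (top_of_set UNIV) T \<and> z \<in> T \<and> (\<forall>w\<in>T. F w = F z)"
    using N(2) by blast
qed

end

theorem proposition4p1:
  fixes K :: "complex set" and R :: "'m::finite set" and emb :: "'m \<Rightarrow> complex \<Rightarrow> complex"
    and U :: "complex set" and \<Lambda> :: "(complex ^ 'd) set"
    and F :: "complex ^ 'd \<Rightarrow> (complex ^ 'm) set"
  assumes "number_field K"
    and "embedding_data K R emb"
    and "R \<noteq> {}" and "R \<noteq> UNIV"
    and "admissible K R emb U"
    and "full_lattice \<Lambda>"
    and "holo_map_torus_OT \<Lambda> K R emb U F"
  shows "\<exists>c. \<forall>z. F z = c"
proof -
  interpret ot_manifold K R emb U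
    using assms(1-3,5) by unfold_locales
  have lifts: "\<And>z. \<exists>V g. z \<in> V \<and> local_lift F V g"
    and periodic: "\<And>z l. l \<in> \<Lambda> \<Longrightarrow> F (z + l) = F z"
    using assms(7) unfolding holo_map_torus_OT_def local_lift_def by blast+
  obtain G where G: "continuous_on UNIV G" "\<And>w. G w \<in> ot_domain R" "\<And>w. G w \<in> F w"
    using ot_graph_section[OF lifts] by blast
  have holo: "holo_on UNIV G"
    using holo_on_ot_section[OF lifts G(1,3)] .
  have real_places_const: "G w $ i = G w' $ i" if "i \<in> R" for w w' i
    using holo_on_UNIV_component_constant_if_Im_pos[OF holo] G(2) that
    unfolding ot_domain_def by blast
  have "G (w + l) = G w" if "l \<in> \<Lambda>" for w l
    using ot_section_periodic[where G = G, OF lifts periodic G(3) real_places_const that] .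
  then have "bounded (range G)"
    using bounded_range_if_periodic[OF assms(6) G(1)] by blast
  then have "G w = G w'" for w w'
    using holo_on_UNIV_bounded_constant[OF holo] by blast
  then have "F constant_on UNIV"
    using constant_if_ot_section_constant[OF lifts G(1,3)] by blast
  then show ?thesis
    unfolding constant_on_def by blast
qed

end
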